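(* Let $p$ be a prime, $q=p^r$, and let $a\in\mathbb{F}_q[t]$ be a polynomial that is not a perfect $p$-th power. Let $\ell\neq p$ be a prime. Put $C_1=a-1$ and $C_\ell=(a^\ell-1)/(a-1)$, and for $m\in\{1,\ell\}$ write $C_m=U_mV_m$ where $U_m$ is the power-free part and $V_m$ the power-full part of $C_m$. Then $$\deg(V_1)+\deg(V_\ell)\le 2\deg(a)-2,$$ and consequently $\deg(U_1)+\deg(U_\ell)\ge \ell\deg(a)-2\deg(a)+2$.
   Context: For a nonzero polynomial $c\in\mathbb{F}_q[t]$ written (up to a unit) as $\prod_\pi \pi^{e_\pi}$ over monic irreducibles $\pi$, its power-free part is $\prod_{e_\pi=1}\pi$ and its power-full part is $\prod_{e_\pi\ge2}\pi^{e_\pi}$ (times the leading-coefficient unit, which does not affect degrees). *)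

theory Defs
  imports "HOL-Computational_Algebra.Computational_Algebra" "HOL-Library.Cardinality"
begin

text \<open>Power-full part: product of the prime powers
  \<open>\<pi>^e\<close> with \<open>e \<ge> 2\<close>.  (The leading-coefficient unit is dropped; it does not
  affect degrees.)\<close>

definition powerfree_part :: "'a::field_gcd poly \<Rightarrow> 'a poly" where
  "powerfree_part c = (\<Prod>\<pi>\<in>{\<pi>\<in>prime_factors c. multiplicity \<pi> c = 1}. \<pi>)"

definition powerfull_part :: "'a::field_gcd poly \<Rightarrow> 'a poly" where
  "powerfull_part c =
     (\<Prod>\<pi>\<in>{\<pi>\<in>prime_factors c. multiplicity \<pi> c \<ge> 2}. \<pi> ^ multiplicity \<pi> c)"

end

theory Submission
  imports Defs "HOL-Number_Theory.Residues"
begin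

text \<open>Put \<open>F = a\<^sup>l - 1 = C\<^sub>1 C\<^sub>l\<close>; the two factors are coprime because \<open>C\<^sub>l \<equiv> l\<close> modulo
  \<open>a - 1\<close> and \<open>l\<close> is a unit in characteristic \<open>p \<noteq> l\<close>.  A prime \<open>\<pi>\<close> occurring in \<open>F\<close> with
  exponent \<open>e \<ge> 2\<close> occurs in \<open>F' = l a\<^sup>l\<^sup>-\<^sup>1 a'\<close> with exponent at least \<open>e - 1 \<ge> e/2\<close>, and it is
  coprime to \<open>a\<close>, so the power-full parts of \<open>C\<^sub>1\<close> and \<open>C\<^sub>l\<close> together have degree at most
  \<open>2 deg a'\<close>.  Since \<open>a\<close> is not a \<open>p\<close>-th power over the perfect field \<open>\<bbbF>\<^sub>q\<close>, \<open>a' \<noteq> 0\<close>,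
  whence \<open>deg a' \<le> deg a - 1\<close>.  The bound on the power-free parts follows from
  \<open>deg C\<^sub>1 + deg C\<^sub>l = l deg a\<close>.\<close>

hide_const (open) UnivPoly.coeff UnivPoly.monom Module.smult

lemma prime_CHAR_finite_field: "prime CHAR('a::{finite,field})"
  by (intro prime_CHAR_semidom finite_imp_CHAR_pos) simp

lemma CHAR_eq_prime_of_card:
  assumes "prime p" "CARD('a::{finite,field}) = p ^ r"
  shows "CHAR('a) = p"
proof -
  note CHAR_prime = prime_CHAR_finite_field[where 'a='a]
  have "CHAR('a) dvd p ^ r"
    using CHAR_dvd_CARD[where 'a='a] assms(2) by simp
  then have "CHAR('a) dvd p"
    using CHAR_prime prime_dvd_power by blast
  then show ?thesis
    using CHAR_prime assms(1) primes_dvd_imp_eq by blast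
qed

lemma surj_CHAR_power: "surj (\<lambda>x::'a::{finite,field}. x ^ CHAR('a))"
proof -
  note CHAR_prime = prime_CHAR_finite_field[where 'a='a]
  have "inj (\<lambda>x::'a. x ^ CHAR('a))"
  proof (rule injI)
    fix x y :: 'a
    assume "x ^ CHAR('a) = y ^ CHAR('a)"
    moreover have "((x - y) + y) ^ CHAR('a) = (x - y) ^ CHAR('a) + y ^ CHAR('a)"
      by (rule freshmans_dream[OF CHAR_prime refl])
    ultimately have "(x - y) ^ CHAR('a) = 0"
      by simp
    then show "x = y"
      by simp
  qed
  then show ?thesis
    by (simp add: finite_UNIV_inj_surj)
qed

text \<open>Over a finite field every coefficient has a \<open>CHAR('a)\<close>-th root, and a vanishing
  derivative means that only exponents divisible by \<open>CHAR('a)\<close> occur.\<close>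

lemma pderiv_eq_0_imp_CHAR_power:
  fixes a :: "'a::{finite,field} poly"
  assumes "pderiv a = 0"
  shows "\<exists>b. a = b ^ CHAR('a)"
proof -
  define P where "P = CHAR('a)"
  have P_prime: "prime P"
    unfolding P_def by (rule prime_CHAR_finite_field)
  obtain root :: "'a \<Rightarrow> 'a" where root: "\<And>x. root x ^ P = x"
    using surj_CHAR_power[where 'a='a] unfolding P_def by (metis surjD)
  have coeff_zero: "coeff a k = 0" if not_dvd: "\<not> P dvd k" for k
  proof -
    obtain n where k: "k = Suc n"
      using not_dvd by (cases k) auto
    have "of_nat k * coeff a k = coeff (pderiv a) n"
      by (simp only: k coeff_pderiv)
    also have "\<dots> = 0"
      by (simp add: assms)
    finally have "of_nat k * coeff a k = 0" .
    moreover have "of_nat k \<noteq> (0::'a)"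
      using not_dvd by (simp add: of_nat_eq_0_iff_char_dvd P_def)
    ultimately show ?thesis
      by simp
  qed
  define b where "b = (\<Sum>i\<le>degree a. monom (root (coeff a (P * i))) i)"
  have "b ^ P = (\<Sum>i\<le>degree a. monom (root (coeff a (P * i))) i ^ P)"
    unfolding b_def by (rule freshmans_dream_sum) (use P_prime in \<open>simp_all add: P_def\<close>)
  also have "\<dots> = (\<Sum>i\<le>degree a. monom (coeff a (P * i)) (P * i))"
    by (simp add: monom_power root mult.commute)
  also have "\<dots> = a"
  proof (rule poly_eqI)
    fix n
    have "coeff (\<Sum>i\<le>degree a. monom (coeff a (P * i)) (P * i)) n
          = (\<Sum>i\<le>degree a. if i = n div P \<and> P dvd n then coeff a n else 0)"
      unfolding coeff_sum coeff_monom
      by (rule sum.cong) (use P_prime prime_gt_0_nat in auto)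
    also have "\<dots> = coeff a n"
    proof (cases "P dvd n \<and> n div P \<le> degree a")
      case True
      then show ?thesis
        by (simp add: sum.delta)
    next
      case False
      moreover have "n > degree a" if "P dvd n" "\<not> n div P \<le> degree a"
        using that div_le_dividend[of n P] by linarith
      ultimately show ?thesis
        using coeff_zero by (cases "P dvd n") (auto simp: coeff_eq_0)
    qed
    finally show "coeff (\<Sum>i\<le>degree a. monom (coeff a (P * i)) (P * i)) n = coeff a n" .
  qed
  finally show ?thesis
    unfolding P_def by metis
qed

lemma degree_eq_sum_prime_factors:
  fixes c :: "'a::field_gcd poly"
  assumes "c \<noteq> 0"
  shows "degree c = (\<Sum>\<pi>\<in>prime_factors c. multiplicity \<pi> c * degree \<pi>)"
proof -
  have "degree c = degree (normalize c)"
    by (intro antisym dvd_imp_degree_le) (use assms in auto)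
  also have "\<dots> = degree (\<Prod>\<pi>\<in>prime_factors c. \<pi> ^ multiplicity \<pi> c)"
    by (simp only: prod_prime_factors[OF assms])
  also have "\<dots> = (\<Sum>\<pi>\<in>prime_factors c. multiplicity \<pi> c * degree \<pi>)"
    by (subst degree_prod_eq_sum_degree)
       (auto dest!: in_prime_factors_imp_prime intro!: sum.cong simp: degree_power_eq)
  finally show ?thesis .
qed

lemma degree_powerfull_part:
  fixes c :: "'a::field_gcd poly"
  shows "degree (powerfull_part c) =
    (\<Sum>\<pi>\<in>{\<pi>\<in>prime_factors c. multiplicity \<pi> c \<ge> 2}. multiplicity \<pi> c * degree \<pi>)"
  unfolding powerfull_part_def
  by (subst degree_prod_eq_sum_degree)
     (auto dest!: in_prime_factors_imp_prime intro!: sum.cong simp: degree_power_eq)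

lemma degree_powerfree_part:
  fixes c :: "'a::field_gcd poly"
  shows "degree (powerfree_part c) =
    (\<Sum>\<pi>\<in>{\<pi>\<in>prime_factors c. multiplicity \<pi> c = 1}. multiplicity \<pi> c * degree \<pi>)"
  unfolding powerfree_part_def
  by (subst degree_prod_eq_sum_degree) (auto dest!: in_prime_factors_imp_prime)

lemma degree_powerfree_part_add_powerfull_part:
  fixes c :: "'a::field_gcd poly"
  assumes "c \<noteq> 0"
  shows "degree (powerfree_part c) + degree (powerfull_part c) = degree c"
proof -
  have "prime_factors c = {\<pi>\<in>prime_factors c. multiplicity \<pi> c = 1}
                          \<union> {\<pi>\<in>prime_factors c. multiplicity \<pi> c \<ge> 2}"
    using prime_factors_multiplicity[of c] by auto
  then have "degree c = (\<Sum>\<pi>\<in>{\<pi>\<in>prime_factors c. multiplicity \<pi> c = 1}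
                          \<union> {\<pi>\<in>prime_factors c. multiplicity \<pi> c \<ge> 2}. multiplicity \<pi> c * degree \<pi>)"
    using degree_eq_sum_prime_factors[OF assms] by simp
  also have "\<dots> = degree (powerfree_part c) + degree (powerfull_part c)"
    unfolding degree_powerfree_part degree_powerfull_part by (rule sum.union_disjoint) auto
  finally show ?thesis ..
qed

lemma degree_powerfull_part_mult_coprime:
  fixes x y :: "'a::field_gcd poly"
  assumes "coprime x y" "x \<noteq> 0" "y \<noteq> 0"
  shows "degree (powerfull_part (x * y)) = degree (powerfull_part x) + degree (powerfull_part y)"
proof -
  have not_both: "\<not> (\<pi> dvd x \<and> \<pi> dvd y)" if "prime \<pi>" for \<pi>
    using assms(1) that by (metis coprime_common_divisor not_prime_unit)
  have multiplicity_left: "multiplicity \<pi> (x * y) = multiplicity \<pi> x" if "\<pi> \<in> prime_factors x" for \<pi>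
  proof -
    have "prime \<pi>" "\<not> \<pi> dvd y"
      using that not_both by (auto simp: in_prime_factors_iff)
    then show ?thesis
      using assms by (simp add: prime_elem_multiplicity_mult_distrib not_dvd_imp_multiplicity_0)
  qed
  have multiplicity_right: "multiplicity \<pi> (x * y) = multiplicity \<pi> y" if "\<pi> \<in> prime_factors y" for \<pi>
  proof -
    have "prime \<pi>" "\<not> \<pi> dvd x"
      using that not_both by (auto simp: in_prime_factors_iff)
    then show ?thesis
      using assms by (simp add: prime_elem_multiplicity_mult_distrib not_dvd_imp_multiplicity_0)
  qed
  define S where "S (z :: 'a poly) = {\<pi>\<in>prime_factors z. multiplicity \<pi> z \<ge> 2}" for z
  have S_mult: "S (x * y) = S x \<union> S y"
    using assms(2,3) multiplicity_left multiplicity_right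
    by (auto simp: S_def prime_factors_product)
  have S_disjoint: "S x \<inter> S y = {}"
    using not_both by (auto simp: S_def in_prime_factors_iff)
  have "degree (powerfull_part (x * y)) = (\<Sum>\<pi>\<in>S (x * y). multiplicity \<pi> (x * y) * degree \<pi>)"
    by (simp add: degree_powerfull_part S_def)
  also have "\<dots> = (\<Sum>\<pi>\<in>S x. multiplicity \<pi> (x * y) * degree \<pi>)
                 + (\<Sum>\<pi>\<in>S y. multiplicity \<pi> (x * y) * degree \<pi>)"
    unfolding S_mult by (rule sum.union_disjoint) (use S_disjoint in \<open>auto simp: S_def\<close>)
  also have "\<dots> = degree (powerfull_part x) + degree (powerfull_part y)"
    unfolding degree_powerfull_part S_def
    by (intro arg_cong2[where f = "(+)"] sum.cong) (auto simp: multiplicity_left multiplicity_right)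
  finally show ?thesis .
qed

definition repeated_part :: "'a::field_gcd poly \<Rightarrow> 'a poly" where
  "repeated_part c = (\<Prod>\<pi>\<in>prime_factors c. \<pi> ^ (multiplicity \<pi> c - 1))"

lemma prod_prime_powers_dvd:
  fixes x :: "'a::factorial_semiring_gcd"
  assumes "finite S" "\<And>\<pi>. \<pi> \<in> S \<Longrightarrow> prime \<pi>" "\<And>\<pi>. \<pi> \<in> S \<Longrightarrow> \<pi> ^ f \<pi> dvd x"
  shows "(\<Prod>\<pi>\<in>S. \<pi> ^ f \<pi>) dvd x"
  using assms
proof (induction S rule: finite_induct)
  case (insert q S)
  have "coprime q (\<pi> ^ f \<pi>)" if "\<pi> \<in> S" for \<pi>
  proof -
    have "coprime q \<pi>"
      using insert that by (intro primes_coprime) auto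
    then show ?thesis
      by simp
  qed
  then have "coprime (q ^ f q) (\<Prod>\<pi>\<in>S. \<pi> ^ f \<pi>)"
    by (simp add: prod_coprime_right)
  then show ?case
    using insert by (simp add: divides_mult)
qed simp

lemma power_Suc_dvd_imp_dvd_pderiv:
  fixes q F :: "'a::{comm_semiring_1,semiring_no_zero_divisors} poly"
  assumes "q ^ Suc n dvd F"
  shows "q ^ n dvd pderiv F"
proof -
  obtain G where G: "F = q ^ Suc n * G"
    using assms by (elim dvdE)
  have "pderiv F = q ^ n * (q * pderiv G + G * smult (of_nat (Suc n)) (pderiv q))"
    unfolding G pderiv_mult pderiv_power_Suc by (simp add: algebra_simps)
  then show ?thesis
    by simp
qed

lemma repeated_part_dvd: "repeated_part c dvd c"
  unfolding repeated_part_def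
  by (rule prod_prime_powers_dvd)
     (auto dest: in_prime_factors_imp_prime intro: dvd_trans[OF le_imp_power_dvd multiplicity_dvd])

lemma repeated_part_dvd_pderiv: "repeated_part c dvd pderiv c"
  unfolding repeated_part_def
proof (rule prod_prime_powers_dvd)
  fix \<pi> assume "\<pi> \<in> prime_factors c"
  then have "\<pi> ^ Suc (multiplicity \<pi> c - 1) dvd c"
    by (simp add: multiplicity_dvd prime_factors_multiplicity)
  then show "\<pi> ^ (multiplicity \<pi> c - 1) dvd pderiv c"
    by (rule power_Suc_dvd_imp_dvd_pderiv)
qed (auto dest: in_prime_factors_imp_prime)

lemma degree_powerfull_part_le_repeated_part:
  "degree (powerfull_part c) \<le> 2 * degree (repeated_part c)"
proof -
  have "degree (repeated_part c) = (\<Sum>\<pi>\<in>prime_factors c. (multiplicity \<pi> c - 1) * degree \<pi>)"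
    unfolding repeated_part_def
    by (subst degree_prod_eq_sum_degree)
       (auto dest!: in_prime_factors_imp_prime intro!: sum.cong simp: degree_power_eq)
  moreover have "degree (powerfull_part c)
      \<le> (\<Sum>\<pi>\<in>{\<pi>\<in>prime_factors c. multiplicity \<pi> c \<ge> 2}. 2 * ((multiplicity \<pi> c - 1) * degree \<pi>))"
    unfolding degree_powerfull_part by (intro sum_mono) auto
  moreover have "\<dots> \<le> (\<Sum>\<pi>\<in>prime_factors c. 2 * ((multiplicity \<pi> c - 1) * degree \<pi>))"
    by (intro sum_mono2) auto
  ultimately show ?thesis
    by (simp add: sum_distrib_left)
qed

lemma degree_pderiv_le: "degree (pderiv a) \<le> degree a - 1"
  by (rule degree_le) (auto simp: coeff_pderiv coeff_eq_0)

lemma pderiv_nonzero_imp_degree_pos: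
  fixes a :: "'a::{comm_semiring_1,semiring_no_zero_divisors} poly"
  assumes "pderiv a \<noteq> 0"
  shows "degree a > 0"
proof (rule ccontr)
  assume "\<not> degree a > 0"
  then have "pderiv a = 0"
    by (intro poly_eqI) (simp add: coeff_pderiv coeff_eq_0)
  with assms show False ..
qed

lemma degree_power_sub_one:
  fixes a :: "'a::idom poly"
  assumes "degree a > 0"
  shows "degree (a ^ l - 1) = l * degree a"
proof (cases "l = 0")
  case False
  have "degree (a ^ l) = l * degree a"
    using assms by (intro degree_power_eq) auto
  moreover have "degree (a ^ l + - 1) = degree (a ^ l)"
    using assms False \<open>degree (a ^ l) = l * degree a\<close> by (intro degree_add_eq_left) simp
  ultimately show ?thesis
    by simp
qed simp

lemma coprime_power_sub_one:
  fixes a :: "'a::{comm_ring_1,algebraic_semidom}"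
  assumes "n > 0"
  shows "coprime (a ^ n - 1) a"
proof (rule coprimeI)
  fix d
  assume d_dvd_diff: "d dvd a ^ n - 1" and d_dvd_a: "d dvd a"
  have "a dvd a ^ n"
    using assms by simp
  with d_dvd_a have "d dvd a ^ n"
    by (rule dvd_trans)
  then have "d dvd a ^ n - (a ^ n - 1)"
    using d_dvd_diff by (rule dvd_diff)
  then show "is_unit d"
    by simp
qed

lemma coprime_sub_one_geometric_sum:
  fixes x :: "'a::{comm_ring_1,algebraic_semidom}"
  assumes "is_unit (of_nat n :: 'a)"
  shows "coprime (x - 1) (\<Sum>i<n. x ^ i)"
proof (rule coprimeI)
  fix d
  assume d_dvd_sub_one: "d dvd x - 1" and d_dvd_sum: "d dvd (\<Sum>i<n. x ^ i)"
  have "x - 1 dvd (\<Sum>i<n. x ^ i - 1)"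
    by (intro dvd_sum) (simp add: power_diff_1_eq)
  also have "(\<Sum>i<n. x ^ i - 1) = (\<Sum>i<n. x ^ i) - of_nat n"
    by (simp add: sum_subtractf)
  finally have "d dvd (\<Sum>i<n. x ^ i) - of_nat n"
    using d_dvd_sub_one by (rule dvd_trans[rotated])
  with d_dvd_sum have "d dvd (\<Sum>i<n. x ^ i) - ((\<Sum>i<n. x ^ i) - of_nat n)"
    by (rule dvd_diff)
  then show "is_unit d"
    using assms by (simp add: dvd_unit_imp_unit)
qed

lemma degree_powerfull_part_power_sub_one:
  fixes a :: "'a::field_gcd poly"
  assumes "pderiv a \<noteq> 0" "of_nat l \<noteq> (0::'a)"
  shows "degree (powerfull_part (a ^ l - 1)) \<le> 2 * (degree a - 1)"
proof -
  define W where "W = repeated_part (a ^ l - 1)"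
  have "l > 0"
    using assms(2) by (intro gr0I) simp
  then have "coprime (a ^ l - 1) a"
    by (rule coprime_power_sub_one)
  then have "coprime W a"
    unfolding W_def by (rule coprime_divisors[OF repeated_part_dvd dvd_refl])
  moreover have "W dvd smult (of_nat l) (a ^ (l - 1) * pderiv a)"
    using repeated_part_dvd_pderiv[of "a ^ l - 1"] by (simp add: W_def pderiv_diff pderiv_power)
  ultimately have "W dvd pderiv a"
    using assms(2) by (simp add: dvd_smult_iff coprime_dvd_mult_right_iff)
  then have "degree W \<le> degree (pderiv a)"
    using assms(1) by (rule dvd_imp_degree_le)
  also have "\<dots> \<le> degree a - 1"
    by (rule degree_pderiv_le)
  finally have "degree W \<le> degree a - 1" .
  then show ?thesis
    using degree_powerfull_part_le_repeated_part[of "a ^ l - 1"] by (simp add: W_def)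
qed

lemma degree_powerfull_part_sub_one_add_geometric_sum:
  fixes a :: "'a::field_gcd poly"
  assumes "pderiv a \<noteq> 0" "of_nat l \<noteq> (0::'a)"
  shows "degree (powerfull_part (a - 1)) + degree (powerfull_part (\<Sum>i<l. a ^ i))
           \<le> 2 * (degree a - 1)"
proof -
  have "l > 0"
    using assms(2) by (intro gr0I) simp
  moreover have "degree a > 0"
    using assms(1) by (rule pderiv_nonzero_imp_degree_pos)
  ultimately have "degree (a ^ l - 1) > 0"
    by (simp add: degree_power_sub_one)
  then have "a ^ l - 1 \<noteq> 0"
    by auto
  then have nonzero: "a - 1 \<noteq> 0" "(\<Sum>i<l. a ^ i) \<noteq> 0"
    by (auto simp: power_diff_1_eq)
  have "is_unit (of_nat l :: 'a poly)"
    using assms(2) by (simp add: of_nat_poly is_unit_const_poly_iff dvd_field_iff)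
  then have "coprime (a - 1) (\<Sum>i<l. a ^ i)"
    by (rule coprime_sub_one_geometric_sum)
  then have "degree (powerfull_part (a - 1)) + degree (powerfull_part (\<Sum>i<l. a ^ i))
      = degree (powerfull_part (a ^ l - 1))"
    using nonzero by (simp add: power_diff_1_eq degree_powerfull_part_mult_coprime)
  also have "\<dots> \<le> 2 * (degree a - 1)"
    using assms by (rule degree_powerfull_part_power_sub_one)
  finally show ?thesis .
qed

theorem mainTheorem3:
  fixes a :: "'a::{finite,field_gcd} poly" and p r l :: nat
  assumes "prime p" and "r > 0" and "CARD('a) = p ^ r"
    and "\<not> (\<exists>b. a = b ^ p)"
    and "prime l" and "l \<noteq> p"
  shows "let C1 = a - 1; Cl = (a ^ l - 1) div (a - 1) in
           int (degree (powerfull_part C1)) + int (degree (powerfull_part Cl))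
             \<le> 2 * int (degree a) - 2
         \<and> int (degree (powerfree_part C1)) + int (degree (powerfree_part Cl))
             \<ge> int l * int (degree a) - 2 * int (degree a) + 2"
proof -
  have CHAR: "CHAR('a) = p"
    using assms(1,3) by (rule CHAR_eq_prime_of_card)
  then have pderiv_a: "pderiv a \<noteq> 0"
    using assms(4) pderiv_eq_0_imp_CHAR_power by metis
  have l_nonzero: "of_nat l \<noteq> (0::'a)"
    using assms(1,5,6) primes_dvd_imp_eq by (auto simp: of_nat_eq_0_iff_char_dvd CHAR)
  define Cl where "Cl = (\<Sum>i<l. a ^ i)"
  have factorization: "a ^ l - 1 = (a - 1) * Cl"
    unfolding Cl_def by (rule power_diff_1_eq)
  have degree_a: "degree a > 0"
    using pderiv_a by (rule pderiv_nonzero_imp_degree_pos)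
  then have degree_product: "degree ((a - 1) * Cl) = l * degree a"
    by (simp flip: factorization add: degree_power_sub_one)
  moreover have "l * degree a > 0"
    using degree_a assms(5) by (simp add: prime_gt_0_nat)
  ultimately have nonzero: "a - 1 \<noteq> 0" "Cl \<noteq> 0"
    by auto
  have powerfull_bound: "degree (powerfull_part (a - 1)) + degree (powerfull_part Cl) \<le> 2 * (degree a - 1)"
    unfolding Cl_def using pderiv_a l_nonzero by (rule degree_powerfull_part_sub_one_add_geometric_sum)
  have "degree (powerfree_part (a - 1)) + degree (powerfull_part (a - 1))
      + (degree (powerfree_part Cl) + degree (powerfull_part Cl)) = l * degree a"
    using nonzero degree_product by (simp add: degree_powerfree_part_add_powerfull_part degree_mult_eq)
  then have "int (degree (powerfree_part (a - 1))) + int (degree (powerfull_part (a - 1)))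
      + (int (degree (powerfree_part Cl)) + int (degree (powerfull_part Cl))) = int l * int (degree a)"
    by (metis of_nat_add of_nat_mult)
  with powerfull_bound degree_a show ?thesis
    using nonzero(1) by (simp add: Let_def factorization) linarith
qed

end
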